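(* Let $C$ be a weak 2-group, let $x\in C$, and let $\bar x\in C$ be an object equipped with isomorphisms $i_x\colon 1\to x\otimes\bar x$ and $e_x\colon\bar x\otimes x\to 1$. Consider the two morphisms $A,B\colon 1\to x\otimes\bar x$ defined as composites $$A\colon\ 1\xrightarrow{i_x}x\otimes\bar x\xrightarrow{\cong}x\otimes(1\otimes\bar x)\xrightarrow{1_x\otimes(e_x^{-1}\otimes 1_{\bar x})}x\otimes((\bar x\otimes x)\otimes\bar x)\xrightarrow{\cong}(x\otimes\bar x)\otimes(x\otimes\bar x)\xrightarrow{i_x^{-1}\otimes 1_{x\otimes\bar x}}1\otimes(x\otimes\bar x)\xrightarrow{\cong}x\otimes\bar x,$$ $$B\colon\ 1\xrightarrow{i_x}x\otimes\bar x\xrightarrow{\cong}(x\otimes 1)\otimes\bar x\xrightarrow{(1_x\otimes e_x^{-1})\otimes 1_{\bar x}}(x\otimes(\bar x\otimes x))\otimes\bar x\xrightarrow{\cong}(x\otimes\bar x)\otimes(x\otimes\bar x)\xrightarrow{1_{x\otimes\bar x}\otimes i_x^{-1}}(x\otimes\bar x)\otimes 1\xrightarrow{\cong}x\otimes\bar x,$$ where each unlabeled arrow $\cong$ is the canonical isomorphism built from associators and left/right unitors (unique by Mac Lane's coherence theorem). Then $A=B$.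
   Context: A weak 2-group is a weak monoidal category (with associator, left and right unitors, unit object $1$) in which every morphism is invertible and every object $x$ admits an object $y$ with $x\otimes y\cong 1\cong y\otimes x$. *)

theory Defs
  imports Main
begin

text \<open>A (weak) monoidal category whose objects are all elements of type 'o and whose
morphisms are all elements of type 'm.  Comp g f is "g after f", defined (meaningfully)
when Cod f = Dom g.\<close>

record ('o, 'm) moncat =
  Dom :: "'m \<Rightarrow> 'o"
  Cod :: "'m \<Rightarrow> 'o"
  Id :: "'o \<Rightarrow> 'm"
  Comp :: "'m \<Rightarrow> 'm \<Rightarrow> 'm"
  Tens :: "'o \<Rightarrow> 'o \<Rightarrow> 'o"
  TensM :: "'m \<Rightarrow> 'm \<Rightarrow> 'm"
  Unit :: 'o
  Assoc :: "'o \<Rightarrow> 'o \<Rightarrow> 'o \<Rightarrow> 'm"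
  Lunit :: "'o \<Rightarrow> 'm"
  Runit :: "'o \<Rightarrow> 'm"

definition hom :: "('o, 'm, 'z) moncat_scheme \<Rightarrow> 'o \<Rightarrow> 'o \<Rightarrow> 'm set" where
  "hom C a b = {f. Dom C f = a \<and> Cod C f = b}"

definition is_inverse :: "('o, 'm, 'z) moncat_scheme \<Rightarrow> 'm \<Rightarrow> 'm \<Rightarrow> bool" where
  "is_inverse C f g \<longleftrightarrow> Dom C g = Cod C f \<and> Cod C g = Dom C f \<and>
     Comp C g f = Id C (Dom C f) \<and> Comp C f g = Id C (Cod C f)"

definition iso :: "('o, 'm, 'z) moncat_scheme \<Rightarrow> 'm \<Rightarrow> bool" where
  "iso C f \<longleftrightarrow> (\<exists>g. is_inverse C f g)"

definition Inv :: "('o, 'm, 'z) moncat_scheme \<Rightarrow> 'm \<Rightarrow> 'm" where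
  "Inv C f = (SOME g. is_inverse C f g)"

definition isomorphic :: "('o, 'm, 'z) moncat_scheme \<Rightarrow> 'o \<Rightarrow> 'o \<Rightarrow> bool" where
  "isomorphic C a b \<longleftrightarrow> (\<exists>f. f \<in> hom C a b \<and> iso C f)"

definition category :: "('o, 'm, 'z) moncat_scheme \<Rightarrow> bool" where
  "category C \<longleftrightarrow>
     (\<forall>a. Dom C (Id C a) = a \<and> Cod C (Id C a) = a) \<and>
     (\<forall>f g. Cod C f = Dom C g \<longrightarrow>
        Dom C (Comp C g f) = Dom C f \<and> Cod C (Comp C g f) = Cod C g) \<and>
     (\<forall>f. Comp C f (Id C (Dom C f)) = f \<and> Comp C (Id C (Cod C f)) f = f) \<and>
     (\<forall>f g h. Cod C f = Dom C g \<longrightarrow> Cod C g = Dom C h \<longrightarrow>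
        Comp C h (Comp C g f) = Comp C (Comp C h g) f)"

definition tensor_functor :: "('o, 'm, 'z) moncat_scheme \<Rightarrow> bool" where
  "tensor_functor C \<longleftrightarrow>
     (\<forall>f g. Dom C (TensM C f g) = Tens C (Dom C f) (Dom C g) \<and>
            Cod C (TensM C f g) = Tens C (Cod C f) (Cod C g)) \<and>
     (\<forall>a b. TensM C (Id C a) (Id C b) = Id C (Tens C a b)) \<and>
     (\<forall>f f' g g'. Cod C f = Dom C f' \<longrightarrow> Cod C g = Dom C g' \<longrightarrow>
        TensM C (Comp C f' f) (Comp C g' g) = Comp C (TensM C f' g') (TensM C f g))"

definition monoidal_category :: "('o, 'm, 'z) moncat_scheme \<Rightarrow> bool" where
  "monoidal_category C \<longleftrightarrow> category C \<and> tensor_functor C \<and>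
     \<comment> \<open>associator \<open>(a\<otimes>b)\<otimes>c \<rightarrow> a\<otimes>(b\<otimes>c)\<close>: natural isomorphism\<close>
     (\<forall>a b c. Assoc C a b c \<in> hom C (Tens C (Tens C a b) c) (Tens C a (Tens C b c))
              \<and> iso C (Assoc C a b c)) \<and>
     (\<forall>f g h. Comp C (Assoc C (Cod C f) (Cod C g) (Cod C h)) (TensM C (TensM C f g) h)
            = Comp C (TensM C f (TensM C g h)) (Assoc C (Dom C f) (Dom C g) (Dom C h))) \<and>
     \<comment> \<open>left unitor \<open>1\<otimes>a \<rightarrow> a\<close>\<close>
     (\<forall>a. Lunit C a \<in> hom C (Tens C (Unit C) a) a \<and> iso C (Lunit C a)) \<and>
     (\<forall>f. Comp C (Lunit C (Cod C f)) (TensM C (Id C (Unit C)) f) = Comp C f (Lunit C (Dom C f))) \<and>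
     \<comment> \<open>right unitor \<open>a\<otimes>1 \<rightarrow> a\<close>\<close>
     (\<forall>a. Runit C a \<in> hom C (Tens C a (Unit C)) a \<and> iso C (Runit C a)) \<and>
     (\<forall>f. Comp C (Runit C (Cod C f)) (TensM C f (Id C (Unit C))) = Comp C f (Runit C (Dom C f))) \<and>
     \<comment> \<open>pentagon\<close>
     (\<forall>a b c d.
        Comp C (Assoc C a b (Tens C c d)) (Assoc C (Tens C a b) c d)
        = Comp C (TensM C (Id C a) (Assoc C b c d))
            (Comp C (Assoc C a (Tens C b c) d) (TensM C (Assoc C a b c) (Id C d)))) \<and>
     \<comment> \<open>triangle\<close>
     (\<forall>a b. Comp C (TensM C (Id C a) (Lunit C b)) (Assoc C a (Unit C) b)
            = TensM C (Runit C a) (Id C b))"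

definition weak_2group :: "('o, 'm, 'z) moncat_scheme \<Rightarrow> bool" where
  "weak_2group C \<longleftrightarrow> monoidal_category C \<and> (\<forall>f. iso C f) \<and>
     (\<forall>x. \<exists>y. isomorphic C (Tens C x y) (Unit C) \<and> isomorphic C (Tens C y x) (Unit C))"

end

theory Submission
  imports Defs
begin

text \<open>Both composites have the form (unit removal) after W after i, with
W : x xb \<rightarrow> (x xb)(x xb).  The two unit removals Lunit \<cdot> (Inv i \<otimes> Id) and
Runit \<cdot> (Id \<otimes> Inv i) agree because Lunit and Runit agree on the unit object
(Kelly).  The two W insert Inv e between x and xb through x (1 xb) and (x 1) xb
respectively; naturality of Assoc and the triangle identify the insertions, and the
remaining regroupings agree by the pentagon.\<close>

locale cat =
  fixes C :: "('o, 'm, 'z) moncat_scheme"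
  assumes category: "category C"
begin

abbreviation comp (infixr "\<cdot>" 55) where "g \<cdot> f \<equiv> Comp C g f"

lemma Dom_Id [simp]: "Dom C (Id C a) = a"
  and Cod_Id [simp]: "Cod C (Id C a) = a"
  using category unfolding category_def by auto

lemma Dom_comp [simp]: "Cod C f = Dom C g \<Longrightarrow> Dom C (g \<cdot> f) = Dom C f"
  and Cod_comp [simp]: "Cod C f = Dom C g \<Longrightarrow> Cod C (g \<cdot> f) = Cod C g"
  using category unfolding category_def by auto

lemma comp_Id_right [simp]: "Dom C f = a \<Longrightarrow> f \<cdot> Id C a = f"
  and comp_Id_left [simp]: "Cod C f = a \<Longrightarrow> Id C a \<cdot> f = f"
  using category unfolding category_def by auto

lemma comp_assoc [simp]:
  "Cod C f = Dom C g \<Longrightarrow> Cod C g = Dom C h \<Longrightarrow> (h \<cdot> g) \<cdot> f = h \<cdot> g \<cdot> f"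
  using category unfolding category_def by metis

lemma is_inverse_Inv: "iso C f \<Longrightarrow> is_inverse C f (Inv C f)"
  unfolding iso_def Inv_def by (rule someI_ex)

lemma Dom_Inv [simp]: "iso C f \<Longrightarrow> Dom C (Inv C f) = Cod C f"
  and Cod_Inv [simp]: "iso C f \<Longrightarrow> Cod C (Inv C f) = Dom C f"
  and comp_Inv_left [simp]: "iso C f \<Longrightarrow> Inv C f \<cdot> f = Id C (Dom C f)"
  and comp_Inv_right [simp]: "iso C f \<Longrightarrow> f \<cdot> Inv C f = Id C (Cod C f)"
  using is_inverse_Inv unfolding is_inverse_def by auto

lemma comp_Inv_cancel_left [simp]: "iso C f \<Longrightarrow> Cod C g = Dom C f \<Longrightarrow> Inv C f \<cdot> f \<cdot> g = g"
  and comp_cancel_Inv_left [simp]: "iso C f \<Longrightarrow> Cod C g = Cod C f \<Longrightarrow> f \<cdot> Inv C f \<cdot> g = g"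
  by (simp_all flip: comp_assoc)

lemma iso_Id [simp]: "iso C (Id C a)"
  unfolding iso_def is_inverse_def by (rule exI[of _ "Id C a"]) simp

lemma iso_Inv [simp]:
  assumes "iso C f"
  shows "iso C (Inv C f)"
  unfolding iso_def is_inverse_def by (rule exI[of _ f]) (simp add: assms)

lemma iso_comp [simp]:
  assumes "iso C f" "iso C g" "Cod C f = Dom C g"
  shows "iso C (g \<cdot> f)"
  unfolding iso_def is_inverse_def
  by (rule exI[of _ "Inv C f \<cdot> Inv C g"]) (simp add: assms)

text \<open>The simplifier keeps composites right-nested, where an equation between
composites no longer matches; comp_reduce turns it into a rule that does.\<close>

lemma comp_reduce: "h \<cdot> g = k \<Longrightarrow> Cod C f = Dom C g \<Longrightarrow> Cod C g = Dom C h \<Longrightarrow> h \<cdot> g \<cdot> f = k \<cdot> f"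
  by (metis comp_assoc)

lemma iso_cancel_left:
  assumes "f \<cdot> g = f \<cdot> h" "iso C f" "Cod C g = Dom C f" "Cod C h = Dom C f"
  shows "g = h"
  by (metis assms comp_Inv_cancel_left)

lemma iso_cancel_right:
  assumes "g \<cdot> f = h \<cdot> f" "iso C f" "Dom C g = Cod C f" "Dom C h = Cod C f"
  shows "g = h"
proof -
  have "(g \<cdot> f) \<cdot> Inv C f = (h \<cdot> f) \<cdot> Inv C f"
    using assms(1) by simp
  then show ?thesis
    using assms(2-4) by simp
qed

end

locale monoidal = cat +
  assumes monoidal: "monoidal_category C"
begin

abbreviation tensor_obj (infixr "\<odot>" 65) where "a \<odot> b \<equiv> Tens C a b"
abbreviation tensor (infixr "\<otimes>" 65) where "f \<otimes> g \<equiv> TensM C f g"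

lemma Dom_tensor [simp]: "Dom C (f \<otimes> g) = Dom C f \<odot> Dom C g"
  and Cod_tensor [simp]: "Cod C (f \<otimes> g) = Cod C f \<odot> Cod C g"
  and tensor_Id [simp]: "Id C a \<otimes> Id C b = Id C (a \<odot> b)"
  using monoidal unfolding monoidal_category_def tensor_functor_def by auto

lemma interchange:
  "Cod C f = Dom C f' \<Longrightarrow> Cod C g = Dom C g' \<Longrightarrow> (f' \<cdot> f) \<otimes> (g' \<cdot> g) = (f' \<otimes> g') \<cdot> (f \<otimes> g)"
  using monoidal unfolding monoidal_category_def tensor_functor_def by auto

lemma Id_tensor_comp: "Cod C f = Dom C g \<Longrightarrow> Id C a \<otimes> (g \<cdot> f) = (Id C a \<otimes> g) \<cdot> (Id C a \<otimes> f)"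
  using interchange[of "Id C a" "Id C a" f g] by simp

lemma comp_tensor_Id: "Cod C f = Dom C g \<Longrightarrow> (g \<cdot> f) \<otimes> Id C a = (g \<otimes> Id C a) \<cdot> (f \<otimes> Id C a)"
  using interchange[of f g "Id C a" "Id C a"] by simp

lemma iso_tensor [simp]:
  assumes "iso C f" "iso C g"
  shows "iso C (f \<otimes> g)"
  unfolding iso_def is_inverse_def
  by (rule exI[of _ "Inv C f \<otimes> Inv C g"]) (simp add: assms flip: interchange)

lemma Dom_Assoc [simp]: "Dom C (Assoc C a b c) = (a \<odot> b) \<odot> c"
  and Cod_Assoc [simp]: "Cod C (Assoc C a b c) = a \<odot> b \<odot> c"
  and iso_Assoc [simp]: "iso C (Assoc C a b c)"
  and Dom_Lunit [simp]: "Dom C (Lunit C a) = Unit C \<odot> a"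
  and Cod_Lunit [simp]: "Cod C (Lunit C a) = a"
  and iso_Lunit [simp]: "iso C (Lunit C a)"
  and Dom_Runit [simp]: "Dom C (Runit C a) = a \<odot> Unit C"
  and Cod_Runit [simp]: "Cod C (Runit C a) = a"
  and iso_Runit [simp]: "iso C (Runit C a)"
  using monoidal unfolding monoidal_category_def hom_def by auto

lemma Assoc_natural:
  "Assoc C (Cod C f) (Cod C g) (Cod C h) \<cdot> ((f \<otimes> g) \<otimes> h)
     = (f \<otimes> g \<otimes> h) \<cdot> Assoc C (Dom C f) (Dom C g) (Dom C h)"
  using monoidal unfolding monoidal_category_def by auto

lemma Lunit_natural: "Lunit C (Cod C f) \<cdot> (Id C (Unit C) \<otimes> f) = f \<cdot> Lunit C (Dom C f)"
  using monoidal unfolding monoidal_category_def by auto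

lemma Runit_natural: "Runit C (Cod C f) \<cdot> (f \<otimes> Id C (Unit C)) = f \<cdot> Runit C (Dom C f)"
  using monoidal unfolding monoidal_category_def by auto

lemma pentagon:
  "Assoc C a b (c \<odot> d) \<cdot> Assoc C (a \<odot> b) c d
     = (Id C a \<otimes> Assoc C b c d) \<cdot> Assoc C a (b \<odot> c) d \<cdot> (Assoc C a b c \<otimes> Id C d)"
  using monoidal unfolding monoidal_category_def by auto

lemma triangle: "(Id C a \<otimes> Lunit C b) \<cdot> Assoc C a (Unit C) b = Runit C a \<otimes> Id C b"
  using monoidal unfolding monoidal_category_def by auto

lemma Id_Unit_tensor_inj:
  assumes "Id C (Unit C) \<otimes> f = Id C (Unit C) \<otimes> g" "Dom C f = Dom C g" "Cod C f = Cod C g"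
  shows "f = g"
proof (rule iso_cancel_right)
  show "f \<cdot> Lunit C (Dom C f) = g \<cdot> Lunit C (Dom C f)"
    using Lunit_natural[of f] Lunit_natural[of g] assms by simp
qed (simp_all add: assms)

lemma tensor_Id_Unit_inj:
  assumes "f \<otimes> Id C (Unit C) = g \<otimes> Id C (Unit C)" "Dom C f = Dom C g" "Cod C f = Cod C g"
  shows "f = g"
proof (rule iso_cancel_right)
  show "f \<cdot> Runit C (Dom C f) = g \<cdot> Runit C (Dom C f)"
    using Runit_natural[of f] Runit_natural[of g] assms by simp
qed (simp_all add: assms)

lemma Lunit_tensor: "Lunit C (a \<odot> b) \<cdot> Assoc C (Unit C) a b = Lunit C a \<otimes> Id C b"
proof -
  let ?u = "Unit C"
  define K where "K = Assoc C ?u (?u \<odot> a) b \<cdot> (Assoc C ?u ?u a \<otimes> Id C b)"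
  have "(Id C ?u \<otimes> (Lunit C (a \<odot> b) \<cdot> Assoc C ?u a b)) \<cdot> K
      = ((Id C ?u \<otimes> Lunit C (a \<odot> b)) \<cdot> Assoc C ?u ?u (a \<odot> b)) \<cdot> Assoc C (?u \<odot> ?u) a b"
    by (simp add: K_def Id_tensor_comp pentagon)
  also have "\<dots> = Assoc C ?u a b \<cdot> ((Runit C ?u \<otimes> Id C a) \<otimes> Id C b)"
    using Assoc_natural[of "Runit C ?u" "Id C a" "Id C b"] by (simp add: triangle)
  also have "\<dots> = (Assoc C ?u a b \<cdot> ((Id C ?u \<otimes> Lunit C a) \<otimes> Id C b)) \<cdot> (Assoc C ?u ?u a \<otimes> Id C b)"
    by (simp add: triangle flip: comp_tensor_Id)
  also have "\<dots> = (Id C ?u \<otimes> Lunit C a \<otimes> Id C b) \<cdot> K"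
    using Assoc_natural[of "Id C ?u" "Lunit C a" "Id C b"] by (simp add: K_def)
  finally have "Id C ?u \<otimes> (Lunit C (a \<odot> b) \<cdot> Assoc C ?u a b) = Id C ?u \<otimes> Lunit C a \<otimes> Id C b"
    by (rule iso_cancel_right) (simp_all add: K_def)
  then show ?thesis
    by (rule Id_Unit_tensor_inj) simp_all
qed

lemma Id_Unit_tensor_Lunit_Unit: "Id C (Unit C) \<otimes> Lunit C (Unit C) = Lunit C (Unit C \<odot> Unit C)"
  by (rule iso_cancel_left[where f = "Lunit C (Unit C)"])
    (simp_all add: Lunit_natural[of "Lunit C (Unit C)", simplified])

lemma Lunit_Unit_eq_Runit_Unit: "Lunit C (Unit C) = Runit C (Unit C)"
proof (rule tensor_Id_Unit_inj)
  show "Lunit C (Unit C) \<otimes> Id C (Unit C) = Runit C (Unit C) \<otimes> Id C (Unit C)"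
    using Lunit_tensor[of "Unit C" "Unit C"] triangle[of "Unit C" "Unit C"]
    by (simp add: Id_Unit_tensor_Lunit_Unit)
qed simp_all

lemma Lunit_tensor_Id_eq_Runit_Id_tensor:
  assumes p: "p \<in> hom C X (Unit C)" "iso C p"
  shows "Lunit C X \<cdot> (p \<otimes> Id C X) = Runit C X \<cdot> (Id C X \<otimes> p)"
proof (rule iso_cancel_left[where f = p])
  have "p \<cdot> Lunit C X \<cdot> (p \<otimes> Id C X) = (Lunit C (Unit C) \<cdot> (Id C (Unit C) \<otimes> p)) \<cdot> (p \<otimes> Id C X)"
    using p Lunit_natural[of p] by (simp add: hom_def)
  also have "\<dots> = Lunit C (Unit C) \<cdot> (p \<otimes> p)"
    using p by (simp add: hom_def flip: interchange)
  also have "\<dots> = (Runit C (Unit C) \<cdot> (p \<otimes> Id C (Unit C))) \<cdot> (Id C X \<otimes> p)"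
    using p by (simp add: hom_def Lunit_Unit_eq_Runit_Unit flip: interchange)
  also have "\<dots> = p \<cdot> Runit C X \<cdot> (Id C X \<otimes> p)"
    using p Runit_natural[of p] by (simp add: hom_def)
  finally show "p \<cdot> Lunit C X \<cdot> (p \<otimes> Id C X) = p \<cdot> Runit C X \<cdot> (Id C X \<otimes> p)" .
qed (use p in \<open>simp_all add: hom_def\<close>)

lemma Assoc_comp_Inv_Runit_tensor_Id:
  "Assoc C a (Unit C) b \<cdot> (Inv C (Runit C a) \<otimes> Id C b) = Id C a \<otimes> Inv C (Lunit C b)"
  by (rule iso_cancel_left[where f = "Id C a \<otimes> Lunit C b"])
    (simp_all add: comp_reduce[OF triangle] flip: interchange)

lemma insert_point_Assoc:
  assumes E: "E \<in> hom C (Unit C) Z"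
  shows "((Id C x \<otimes> E) \<otimes> Id C y) \<cdot> (Inv C (Runit C x) \<otimes> Id C y)
    = Inv C (Assoc C x Z y) \<cdot> (Id C x \<otimes> E \<otimes> Id C y) \<cdot> (Id C x \<otimes> Inv C (Lunit C y))"
proof (rule iso_cancel_left[where f = "Assoc C x Z y"])
  have natural: "Assoc C x Z y \<cdot> ((Id C x \<otimes> E) \<otimes> Id C y) = (Id C x \<otimes> E \<otimes> Id C y) \<cdot> Assoc C x (Unit C) y"
    using Assoc_natural[of "Id C x" E "Id C y"] E by (simp add: hom_def)
  show "Assoc C x Z y \<cdot> ((Id C x \<otimes> E) \<otimes> Id C y) \<cdot> (Inv C (Runit C x) \<otimes> Id C y)
    = Assoc C x Z y \<cdot> Inv C (Assoc C x Z y) \<cdot> (Id C x \<otimes> E \<otimes> Id C y) \<cdot> (Id C x \<otimes> Inv C (Lunit C y))"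
    using E by (simp add: comp_reduce[OF natural] Assoc_comp_Inv_Runit_tensor_Id hom_def)
qed (use E in \<open>simp_all add: hom_def\<close>)

lemma pentagon_Inv:
  "Assoc C (a \<odot> b) c d \<cdot> (Inv C (Assoc C a b c) \<otimes> Id C d)
     = Inv C (Assoc C a b (c \<odot> d)) \<cdot> (Id C a \<otimes> Assoc C b c d) \<cdot> Assoc C a (b \<odot> c) d"
  by (rule iso_cancel_left[where f = "Assoc C a b (c \<odot> d)"])
    (simp_all add: comp_reduce[OF pentagon] flip: comp_tensor_Id)

lemma insert_point_regroup_eq:
  assumes E: "E \<in> hom C (Unit C) (y \<odot> x)"
  shows "Assoc C (x \<odot> y) x y \<cdot> (Inv C (Assoc C x y x) \<otimes> Id C y) \<cdot> ((Id C x \<otimes> E) \<otimes> Id C y)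
           \<cdot> (Inv C (Runit C x) \<otimes> Id C y)
    = Inv C (Assoc C x y (x \<odot> y)) \<cdot> (Id C x \<otimes> Assoc C y x y) \<cdot> (Id C x \<otimes> E \<otimes> Id C y)
           \<cdot> (Id C x \<otimes> Inv C (Lunit C y))"
  using E by (simp add: insert_point_Assoc comp_reduce[OF pentagon_Inv] hom_def)

end

theorem lemma5p2:
  fixes C :: "('o, 'm) moncat" and x xb :: 'o and i e :: 'm
  assumes "weak_2group C"
    and "i \<in> hom C (Unit C) (Tens C x xb)" and "iso C i"
    and "e \<in> hom C (Tens C xb x) (Unit C)" and "iso C e"
  shows
    "let T = Tens C; M = TensM C; c = Comp C; I = Id C; iv = Inv C;
         a = Assoc C; l = Lunit C; r = Runit C
     in
       c (l (T x xb)) (c (M (iv i) (I (T x xb))) (c (iv (a x xb (T x xb)))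
         (c (M (I x) (a xb x xb)) (c (M (I x) (M (iv e) (I xb))) (c (M (I x) (iv (l xb))) i)))))
     = c (r (T x xb)) (c (M (I (T x xb)) (iv i)) (c (a (T x xb) x xb)
         (c (M (iv (a x xb x)) (I xb)) (c (M (M (I x) (iv e)) (I xb)) (c (M (iv (r x)) (I xb)) i)))))"
proof -
  have "monoidal_category C"
    using assms(1) by (simp add: weak_2group_def)
  then interpret monoidal C
    by unfold_locales (simp_all add: monoidal_category_def)
  let ?X = "x \<odot> xb"
  have "(Lunit C ?X \<cdot> (Inv C i \<otimes> Id C ?X))
        \<cdot> (Inv C (Assoc C x xb ?X) \<cdot> (Id C x \<otimes> Assoc C xb x xb) \<cdot> (Id C x \<otimes> Inv C e \<otimes> Id C xb)
            \<cdot> (Id C x \<otimes> Inv C (Lunit C xb))) \<cdot> i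
      = (Runit C ?X \<cdot> (Id C ?X \<otimes> Inv C i))
        \<cdot> (Assoc C ?X x xb \<cdot> (Inv C (Assoc C x xb x) \<otimes> Id C xb) \<cdot> ((Id C x \<otimes> Inv C e) \<otimes> Id C xb)
            \<cdot> (Inv C (Runit C x) \<otimes> Id C xb)) \<cdot> i"
    using assms(2-5)
    by (simp add: Lunit_tensor_Id_eq_Runit_Id_tensor insert_point_regroup_eq hom_def)
  then show ?thesis
    using assms(2-5) by (simp add: Let_def hom_def)
qed

end
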